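(* For any $\alpha>0$ there exists $\beta>0$ such that the following holds. Let $\Lambda_1,\dots,\Lambda_m\subseteq\mathbb{R}^d$ be hyperplanes with $b\in\bigcap_{i\in[m]}\Lambda_i$, and let $j$ be the lowest dimension for which the set $V=\{v_1,\dots,v_m\}$ of their unit normal vectors is $(j,\beta^j)$-flat with respect to a $j$-plane $\Lambda_B$ with $b\in\Lambda_B$. Let $S\subseteq\mathbb{R}^d$ and $p\in S$. If $S$ is $(p,d-1,\beta^d)$-flat with respect to $\Lambda_i$ for every $i\in[m]$, then $S$ is $(p,d-j,\alpha)$-flat with respect to $\Lambda:=\Lambda_B(b)^{\perp}$.
   Context: A $j$-plane is an affine subspace of dimension $j$. The angle between a vector $v$ and a plane $\Lambda$ is the infimum of the angles between $v$ and vectors $w\in\Lambda-\Lambda$. A set of vectors $V$ is $(j,\alpha)$-flat with respect to a $j$-plane $\Lambda$ if every $v\in V$ makes angle at most $\alpha$ with $\Lambda$. A set $S$ is $(p,j,\alpha)$-flat with respect to a $j$-plane $\Lambda$ (for $p\in S$) if $\{p-q:q\in S\}$ is $(j,\alpha)$-flat with respect to $\Lambda$. For a $j$-plane $\gamma\subseteq\mathbb{R}^d$ and $p\in\gamma$, $\gamma(p)^{\perp}$ is the $(d-j)$-plane through $p$ orthogonal to $\gamma$. *)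

theory Defs
  imports "HOL-Analysis.Analysis"
begin

definition vec_angle :: "'a::euclidean_space \<Rightarrow> 'a \<Rightarrow> real" where
  "vec_angle v w = arccos ((v \<bullet> w) / (norm v * norm w))"

definition is_plane :: "nat \<Rightarrow> 'a::euclidean_space set \<Rightarrow> bool" where
  "is_plane j L \<longleftrightarrow> affine L \<and> L \<noteq> {} \<and> aff_dim L = int j"

text \<open>Conventions: the zero vector makes angle 0 with every plane;
  if L - L = {0} (a 0-plane) a nonzero vector makes angle pi/2 with it.\<close>
definition plane_angle :: "'a::euclidean_space \<Rightarrow> 'a set \<Rightarrow> real" where
  "plane_angle v L =
     (if v = 0 then 0
      else if {w. \<exists>x\<in>L. \<exists>y\<in>L. w = x - y \<and> w \<noteq> 0} = {} then pi / 2
      else Inf (vec_angle v ` {w. \<exists>x\<in>L. \<exists>y\<in>L. w = x - y \<and> w \<noteq> 0}))"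

definition flat_vecs :: "nat \<Rightarrow> real \<Rightarrow> 'a::euclidean_space set \<Rightarrow> 'a set \<Rightarrow> bool" where
  "flat_vecs j \<alpha> V L \<longleftrightarrow> is_plane j L \<and> (\<forall>v\<in>V. plane_angle v L \<le> \<alpha>)"

definition flat_set :: "'a::euclidean_space \<Rightarrow> nat \<Rightarrow> real \<Rightarrow> 'a set \<Rightarrow> 'a set \<Rightarrow> bool" where
  "flat_set p j \<alpha> S L \<longleftrightarrow> p \<in> S \<and> flat_vecs j \<alpha> {p - q | q. q \<in> S} L"

definition perp_plane :: "'a::euclidean_space set \<Rightarrow> 'a \<Rightarrow> 'a set" where
  "perp_plane \<gamma> p = {x. \<forall>y\<in>\<gamma>. \<forall>z\<in>\<gamma>. (x - p) \<bullet> (y - z) = 0}"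

end

theory Submission
  imports Defs
begin

(* Translated to the origin, Lambda_B becomes a j-dimensional subspace U, and every normal v_i
   lies within beta^j of U.  A unit direction u of S - p is almost orthogonal to every v_i,
   because S is flat with respect to the hyperplanes Lambda_i.  Split u = y + z with y in U and
   z orthogonal to U.  If |y| >= 8 beta, then every v_i satisfies |<v_i, y/|y|>| <= beta^(j-1)/4,
   so every v_i makes angle at most beta^(j-1) with the hyperplane of U orthogonal to y; this
   (j-1)-dimensional subspace, translated to b, contradicts the minimality of j.  Hence
   |y| < 8 beta <= sin alpha, and u makes angle at most alpha with the direction z of
   Lambda_B(b)^perp. *)

lemma sin_ge_half_self:
  fixes x :: real
  assumes "0 \<le> x" "x \<le> 1"
  shows "x / 2 \<le> sin x"
proof -
  have "\<bar>sin x - x\<bar> \<le> x ^ 3 / 6"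
    using Maclaurin_sin_bound[of x 3] assms by (simp add: sin_coeff_def numeral_3_eq_3)
  moreover have "x ^ 3 \<le> x ^ 1"
    using assms by (intro power_decreasing) auto
  ultimately show ?thesis
    using assms unfolding abs_le_iff power_one_right by linarith
qed

lemma inner_div_norms_bounded: "u \<bullet> w / (norm u * norm w) \<in> {-1..1}"
proof -
  have "\<bar>u \<bullet> w / (norm u * norm w)\<bar> \<le> 1"
    using Cauchy_Schwarz_ineq2[of u w]
    by (cases "norm u * norm w = 0") (simp_all add: abs_mult divide_le_eq_1)
  then show ?thesis
    unfolding abs_le_iff atLeastAtMost_iff by linarith
qed

lemma vec_angle_nonneg: "0 \<le> vec_angle u w"
  using inner_div_norms_bounded[of u w] unfolding vec_angle_def
  by (intro arccos_lbound) auto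

lemma arccos_le_vec_angle:
  assumes "norm u = 1" "w \<noteq> 0" "u \<bullet> w \<le> c * norm w" "c \<le> 1"
  shows "arccos c \<le> vec_angle u w"
  unfolding vec_angle_def using inner_div_norms_bounded[of u w] assms
  by (intro arccos_le_arccos) (auto simp: divide_le_eq mult.commute)

lemma vec_angle_eq_arccos_norm:
  assumes "norm u = 1" "w \<noteq> 0" "u \<bullet> w = (norm w)\<^sup>2"
  shows "vec_angle u w = arccos (norm w)"
  using assms by (simp add: vec_angle_def power2_eq_square)

lemma plane_angle_le_vec_angle:
  assumes "x \<in> L" "y \<in> L" "x \<noteq> y"
  shows "plane_angle u L \<le> vec_angle u (x - y)"
proof (cases "u = 0")
  case True
  then show ?thesis
    by (simp add: plane_angle_def vec_angle_nonneg)
next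
  case False
  let ?D = "{w. \<exists>x\<in>L. \<exists>y\<in>L. w = x - y \<and> w \<noteq> 0}"
  have "x - y \<in> ?D"
    using assms by auto
  moreover have "bdd_below (vec_angle u ` ?D)"
    by (rule bdd_belowI[of _ 0]) (auto simp: vec_angle_nonneg)
  ultimately have "Inf (vec_angle u ` ?D) \<le> vec_angle u (x - y)"
    by (intro cInf_lower) auto
  moreover have "?D \<noteq> {}"
    using \<open>x - y \<in> ?D\<close> by blast
  ultimately show ?thesis
    unfolding plane_angle_def using False by (simp only: if_False simp_thms)
qed

lemma le_plane_angleI:
  assumes "u \<noteq> 0" "A \<le> pi / 2"
    and "\<And>x y. x \<in> L \<Longrightarrow> y \<in> L \<Longrightarrow> x \<noteq> y \<Longrightarrow> A \<le> vec_angle u (x - y)"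
  shows "A \<le> plane_angle u L"
proof (cases "{w. \<exists>x\<in>L. \<exists>y\<in>L. w = x - y \<and> w \<noteq> 0} = {}")
  case True
  then show ?thesis
    using assms by (simp add: plane_angle_def)
next
  case False
  then have "A \<le> Inf (vec_angle u ` {w. \<exists>x\<in>L. \<exists>y\<in>L. w = x - y \<and> w \<noteq> 0})"
    using assms(3) by (intro cInf_greatest) auto
  then show ?thesis
    unfolding plane_angle_def using False assms(1) by (simp only: if_False simp_thms)
qed

lemma plane_angle_scaleR:
  assumes "0 < c"
  shows "plane_angle (c *\<^sub>R u) L = plane_angle u L"
proof -
  have "vec_angle (c *\<^sub>R u) w = vec_angle u w" for w
    using assms by (simp add: vec_angle_def)
  moreover have "c *\<^sub>R u = 0 \<longleftrightarrow> u = 0"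
    using assms by simp
  ultimately show ?thesis
    unfolding plane_angle_def by presburger
qed

lemma vec_angle_le_of_orthogonal_remainder:
  assumes u: "norm u = 1" and orth: "orthogonal (u - w) w"
    and small: "norm (u - w) \<le> sin \<delta>" and \<delta>: "0 \<le> \<delta>" "\<delta> < pi / 2"
  shows "w \<noteq> 0 \<and> vec_angle u w \<le> \<delta>"
proof -
  have pyth: "(norm (u - w))\<^sup>2 + (norm w)\<^sup>2 = 1"
    using norm_add_Pythagorean[OF orth] u by simp
  have "(norm (u - w))\<^sup>2 \<le> (sin \<delta>)\<^sup>2"
    using small by (intro power_mono) auto
  then have "(cos \<delta>)\<^sup>2 \<le> (norm w)\<^sup>2"
    using pyth sin_cos_squared_add[of \<delta>] by linarith
  then have cos_le: "cos \<delta> \<le> norm w"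
    by (rule power2_le_imp_le) simp
  have "0 < cos \<delta>"
    using \<delta> by (intro cos_gt_zero_pi) auto
  then have "w \<noteq> 0"
    using cos_le by auto
  moreover have "u \<bullet> w = (norm w)\<^sup>2"
    using orth by (simp add: orthogonal_def inner_diff_left power2_norm_eq_inner)
  moreover have "norm w \<le> 1"
    using pyth by (metis abs_norm_cancel abs_square_le_1 le_add_same_cancel2 zero_le_power2)
  ultimately have "vec_angle u w \<le> arccos (cos \<delta>)"
    using u cos_le by (simp add: vec_angle_eq_arccos_norm arccos_le_arccos)
  also have "\<dots> = \<delta>"
    using \<delta> by (intro arccos_cos) auto
  finally show ?thesis
    using \<open>w \<noteq> 0\<close> by simp
qed

lemma orthogonal_component_le_plane_angle:
  assumes u: "norm u = 1" "u = p + r" and p: "p \<in> U" and r: "\<forall>x\<in>U. orthogonal x r"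
    and dirs: "\<And>x y. x \<in> L \<Longrightarrow> y \<in> L \<Longrightarrow> x - y \<in> U"
    and angle: "plane_angle u L \<le> e" and e: "e < pi / 2"
  shows "norm r \<le> e"
proof -
  have pyth: "(norm p)\<^sup>2 + (norm r)\<^sup>2 = 1"
    using norm_add_Pythagorean[of p r] u p r by simp
  then have p1: "norm p \<le> 1"
    by (metis abs_norm_cancel abs_square_le_1 le_add_same_cancel1 zero_le_power2)
  have "arccos (norm p) \<le> plane_angle u L"
  proof (rule le_plane_angleI)
    show "u \<noteq> 0" using u by auto
    show "arccos (norm p) \<le> pi / 2" using p1 by (intro arccos_le_pi2) auto
    fix x y assume "x \<in> L" "y \<in> L" "x \<noteq> y"
    then have "x - y \<in> U" "x - y \<noteq> 0" using dirs by auto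
    moreover have "r \<bullet> (x - y) = 0"
      using r \<open>x - y \<in> U\<close> by (metis orthogonal_def inner_commute)
    then have "u \<bullet> (x - y) = p \<bullet> (x - y)"
      by (simp add: u(2) inner_add_left)
    ultimately show "arccos (norm p) \<le> vec_angle u (x - y)"
      using u p1 norm_cauchy_schwarz[of p "x - y"] by (intro arccos_le_vec_angle) auto
  qed
  then have arccos_le: "arccos (norm p) \<le> e"
    using angle by linarith
  have "0 \<le> arccos (norm p)"
    using p1 norm_ge_zero[of p] by (intro arccos_lbound) linarith+
  then have "cos e \<le> cos (arccos (norm p))"
    using arccos_le e by (intro cos_monotone_0_pi_le) auto
  then have cos_le: "cos e \<le> norm p"
    using p1 by (simp add: cos_arccos_abs)
  have "0 \<le> e"
    using \<open>0 \<le> arccos (norm p)\<close> arccos_le by linarith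
  then have "(cos e)\<^sup>2 \<le> (norm p)\<^sup>2"
    using cos_le e by (intro power_mono cos_ge_zero) auto
  then have "(norm r)\<^sup>2 \<le> (sin e)\<^sup>2"
    using pyth sin_cos_squared_add[of e] by linarith
  also have "\<dots> \<le> e\<^sup>2"
    by (metis abs_sin_x_le_abs_x power2_abs abs_ge_zero power_mono)
  finally show ?thesis
    using \<open>0 \<le> e\<close> by (rule power2_le_imp_le)
qed

lemma abs_inner_normal_le_plane_angle:
  assumes v: "norm v = 1" and normal: "\<forall>x\<in>H. \<forall>y\<in>H. v \<bullet> (x - y) = 0"
    and angle: "plane_angle x H \<le> e" and e: "e < pi / 2"
  shows "\<bar>x \<bullet> v\<bar> \<le> e * norm x"
proof (cases "x = 0")
  case False
  define u where "u = x /\<^sub>R norm x"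
  have u: "norm u = 1" "plane_angle u H \<le> e"
    using False angle by (simp_all add: u_def plane_angle_scaleR)
  have "v \<bullet> v = 1"
    using v by (simp add: dot_square_norm)
  then have "v \<bullet> (u - (u \<bullet> v) *\<^sub>R v) = 0"
    by (simp add: inner_diff_right inner_commute)
  then have "norm ((u \<bullet> v) *\<^sub>R v) \<le> e"
    using u normal e
    by (intro orthogonal_component_le_plane_angle[where U = "{x. v \<bullet> x = 0}"])
       (auto simp: orthogonal_def inner_commute)
  moreover have "\<bar>u \<bullet> v\<bar> = \<bar>x \<bullet> v\<bar> / norm x"
    by (simp add: u_def abs_mult divide_inverse_commute)
  ultimately show ?thesis
    using v False by (simp add: pos_divide_le_eq)
qed simp

lemma subspace_orthogonal_decomp:
  fixes v :: "'a::euclidean_space"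
  assumes "subspace U"
  obtains p where "p \<in> U" "\<forall>x\<in>U. orthogonal x (v - p)"
proof -
  have "span U = U"
    using assms by (simp add: span_eq_iff)
  then obtain p r where "p \<in> U" "\<And>x. x \<in> U \<Longrightarrow> orthogonal r x" "v = p + r"
    using orthogonal_subspace_decomp_exists[of U v] by metis
  then show thesis
    by (intro that[of p]) (auto simp: orthogonal_commute)
qed

lemma subspace_orthogonal_to_vector_within:
  assumes "subspace U"
  shows "subspace {x \<in> U. orthogonal e x}"
  using assms by (auto simp: subspace_def orthogonal_clauses)

lemma dim_orthogonal_to_vector_within:
  fixes e :: "'a::euclidean_space"
  assumes U: "subspace U" and e: "e \<in> U" "e \<noteq> 0"
  shows "dim U = Suc (dim {x \<in> U. orthogonal e x})"
proof -
  have "{x \<in> U. \<forall>y \<in> span {e}. orthogonal y x} = {x \<in> U. orthogonal e x}"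
    by (auto simp: span_base orthogonal_commute intro: orthogonal_to_span)
  moreover have "span {e} \<subseteq> U"
    using U e by (simp add: span_minimal)
  ultimately have "dim {x \<in> U. orthogonal e x} + dim (span {e}) = dim U"
    using dim_subspace_orthogonal_to_vectors[of "span {e}" U] U by simp
  then show ?thesis
    using e by (simp add: dim_span)
qed

lemma exists_vec_angle_le_orthogonal_to:
  assumes U: "subspace U" and e: "e \<in> U" "norm e = 1" and v: "norm v = 1"
    and p: "p \<in> U" "\<forall>x\<in>U. orthogonal x (v - p)"
    and small: "norm (v - p) + \<bar>v \<bullet> e\<bar> \<le> sin \<delta>" and \<delta>: "0 \<le> \<delta>" "\<delta> < pi / 2"
  shows "\<exists>w\<in>U. orthogonal e w \<and> w \<noteq> 0 \<and> vec_angle v w \<le> \<delta>"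
proof -
  \<comment> \<open>Since \<open>v \<bullet> e = p \<bullet> e\<close>, this is the projection of \<open>p\<close> onto the orthogonal complement of \<open>e\<close>.\<close>
  define w where "w = p - (v \<bullet> e) *\<^sub>R e"
  have "w \<in> U"
    unfolding w_def using U e p by (simp add: subspace_diff subspace_scale)
  have "e \<bullet> e = 1"
    using e by (simp add: dot_square_norm)
  moreover have "e \<bullet> (v - p) = 0"
    using p e by (simp add: orthogonal_def)
  ultimately have "orthogonal e w"
    unfolding w_def orthogonal_def by (simp add: inner_diff_left inner_diff_right inner_commute)
  have vw: "v - w = (v - p) + (v \<bullet> e) *\<^sub>R e"
    unfolding w_def by simp
  have "orthogonal (v - p) w"
    using p \<open>w \<in> U\<close> by (simp add: orthogonal_commute)
  then have "orthogonal (v - w) w"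
    unfolding vw using \<open>orthogonal e w\<close> by (simp add: orthogonal_clauses)
  moreover have "norm (v - w) \<le> sin \<delta>"
    unfolding vw using small e norm_triangle_ineq[of "v - p" "(v \<bullet> e) *\<^sub>R e"] by simp
  ultimately show ?thesis
    using vec_angle_le_of_orthogonal_remainder[OF v _ _ \<delta>] \<open>w \<in> U\<close> \<open>orthogonal e w\<close> by blast
qed

lemma exists_vec_angle_le_orthogonal_to_large_component:
  assumes U: "subspace U" and \<beta>: "0 < \<beta>" "\<beta> \<le> 1/4" and \<delta>: "0 \<le> \<delta>" "\<delta> \<le> 1"
    and y: "y \<in> U" "8 * \<beta> \<le> norm y" and z: "\<forall>x\<in>U. orthogonal x z" "norm z \<le> 1"
    and v: "norm v = 1" "\<bar>(y + z) \<bullet> v\<bar> \<le> \<beta> * \<delta>"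
    and p: "p \<in> U" "\<forall>x\<in>U. orthogonal x (v - p)" "norm (v - p) \<le> \<beta> * \<delta>"
  shows "\<exists>w\<in>U. orthogonal y w \<and> w \<noteq> 0 \<and> vec_angle v w \<le> \<delta>"
proof -
  have "y \<noteq> 0"
    using y \<beta> by auto
  define e where "e = y /\<^sub>R norm y"
  have e: "e \<in> U" "norm e = 1"
    using U y \<open>y \<noteq> 0\<close> by (auto simp: e_def subspace_scale)
  have "p \<bullet> z = 0"
    using z p(1) by (simp add: orthogonal_def)
  then have "v \<bullet> y = (y + z) \<bullet> v - (v - p) \<bullet> z"
    by (simp add: inner_add_left inner_add_right inner_diff_left inner_diff_right inner_commute)
  moreover have "\<bar>(v - p) \<bullet> z\<bar> \<le> norm (v - p)"
    using Cauchy_Schwarz_ineq2[of "v - p" z] mult_left_le[OF z(2) norm_ge_zero[of "v - p"]]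
    by linarith
  ultimately have "\<bar>v \<bullet> y\<bar> \<le> 2 * \<beta> * \<delta>"
    using v(2) p(3) by linarith
  have "\<bar>v \<bullet> e\<bar> = \<bar>v \<bullet> y\<bar> / norm y"
    by (simp add: e_def abs_mult divide_inverse_commute)
  also have "\<dots> \<le> (2 * \<beta> * \<delta>) / (8 * \<beta>)"
    using \<open>\<bar>v \<bullet> y\<bar> \<le> 2 * \<beta> * \<delta>\<close> y(2) \<beta> by (intro frac_le) auto
  also have "\<dots> = \<delta> / 4"
    using \<beta> by simp
  finally have "\<bar>v \<bullet> e\<bar> \<le> \<delta> / 4" .
  moreover have "\<beta> * \<delta> \<le> \<delta> / 4"
    using mult_right_mono[OF \<beta>(2) \<delta>(1)] by simp
  moreover have "\<delta> / 2 \<le> sin \<delta>"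
    using \<delta> by (rule sin_ge_half_self)
  ultimately have "norm (v - p) + \<bar>v \<bullet> e\<bar> \<le> sin \<delta>"
    using p(3) by linarith
  then have "\<exists>w\<in>U. orthogonal e w \<and> w \<noteq> 0 \<and> vec_angle v w \<le> \<delta>"
    using \<delta> pi_gt3 by (intro exists_vec_angle_le_orthogonal_to[OF U e v(1) p(1,2)]) auto
  then obtain w where "w \<in> U" "orthogonal e w" "w \<noteq> 0" "vec_angle v w \<le> \<delta>"
    by blast
  moreover have "orthogonal y w"
    using \<open>orthogonal e w\<close> \<open>y \<noteq> 0\<close> by (simp add: e_def)
  ultimately show ?thesis
    by blast
qed

lemma unit_vector_near_orthogonal_complement:
  fixes u :: "'a::euclidean_space"
  assumes U: "subspace U" and \<beta>: "0 < \<beta>" "\<beta> \<le> 1/4"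
    and near: "\<And>v. v \<in> V \<Longrightarrow>
      norm v = 1 \<and> (\<exists>p\<in>U. (\<forall>x\<in>U. orthogonal x (v - p)) \<and> norm (v - p) \<le> \<beta> ^ dim U)"
    and minimal: "\<And>W. subspace W \<Longrightarrow> dim W < dim U \<Longrightarrow>
      \<not> (\<forall>v\<in>V. \<exists>w\<in>W. w \<noteq> 0 \<and> vec_angle v w \<le> \<beta> ^ dim W)"
    and u: "norm u = 1" "\<And>v. v \<in> V \<Longrightarrow> \<bar>u \<bullet> v\<bar> \<le> \<beta> ^ dim U"
  shows "\<exists>z. (\<forall>x\<in>U. orthogonal x z) \<and> u - z \<in> U \<and> norm (u - z) < 8 * \<beta>"
proof -
  obtain y where y: "y \<in> U" and z: "\<forall>x\<in>U. orthogonal x (u - y)"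
    using subspace_orthogonal_decomp[OF U] .
  define z where "z = u - y"
  have uyz: "u = y + z" and z: "\<forall>x\<in>U. orthogonal x z"
    using z by (simp_all add: z_def)
  have "(norm y)\<^sup>2 + (norm z)\<^sup>2 = 1"
    using norm_add_Pythagorean[of y z] y z u(1) uyz by simp
  then have "norm z \<le> 1"
    by (metis abs_norm_cancel abs_square_le_1 le_add_same_cancel2 zero_le_power2)
  have "norm y < 8 * \<beta>"
  proof (rule ccontr)
    assume "\<not> norm y < 8 * \<beta>"
    then have y_large: "8 * \<beta> \<le> norm y" by simp
    with \<beta> have "y \<noteq> 0" by auto
    define W where "W = {x \<in> U. orthogonal y x}"
    define k where "k = dim W"
    have W: "subspace W" "dim U = Suc k"
      unfolding W_def k_def using U y \<open>y \<noteq> 0\<close>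
      by (auto simp: subspace_orthogonal_to_vector_within dim_orthogonal_to_vector_within)
    have "\<beta> ^ k \<le> 1"
      using \<beta> by (intro power_le_one) auto
    have "\<exists>w\<in>W. w \<noteq> 0 \<and> vec_angle v w \<le> \<beta> ^ k" if v: "v \<in> V" for v
    proof -
      obtain p where "norm v = 1" "p \<in> U" "\<forall>x\<in>U. orthogonal x (v - p)"
        "norm (v - p) \<le> \<beta> * \<beta> ^ k"
        using near[OF v] W(2) by auto
      moreover have "\<bar>(y + z) \<bullet> v\<bar> \<le> \<beta> * \<beta> ^ k"
        using u(2)[OF v] W(2) uyz by simp
      ultimately have "\<exists>w\<in>U. orthogonal y w \<and> w \<noteq> 0 \<and> vec_angle v w \<le> \<beta> ^ k"
        using \<beta> \<open>\<beta> ^ k \<le> 1\<close>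
        by (intro exists_vec_angle_le_orthogonal_to_large_component[OF U \<beta> _ _ y y_large z
              \<open>norm z \<le> 1\<close>]) auto
      then show ?thesis
        unfolding W_def by auto
    qed
    then show False
      using minimal[OF W(1)] W(2) unfolding k_def by auto
  qed
  then show ?thesis
    using y z uyz by auto
qed

lemma is_plane_translation:
  fixes W :: "'a::euclidean_space set"
  assumes "subspace W"
  shows "is_plane (dim W) ((+) b ` W)"
  unfolding is_plane_def
proof (intro conjI)
  show "affine ((+) b ` W)"
    using assms by (simp add: subspace_imp_affine affine_translation[symmetric])
  show "(+) b ` W \<noteq> {}"
    using subspace_0[OF assms] by blast
  show "aff_dim ((+) b ` W) = int (dim W)"
    using assms by (simp add: aff_dim_translation_eq aff_dim_subspace)
qed

lemma is_plane_translationE: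
  fixes L :: "'a::euclidean_space set"
  assumes "is_plane j L" "b \<in> L"
  obtains U where "subspace U" "dim U = j" "L = (+) b ` U"
proof
  let ?U = "(\<lambda>x. - b + x) ` L"
  show "subspace ?U"
    using assms by (intro affine_diffs_subspace) (auto simp: is_plane_def)
  have "aff_dim L = int (dim ?U)"
    using assms(2) by (intro aff_dim_eq_dim) (simp add: hull_inc)
  then show "dim ?U = j"
    using assms(1) by (simp add: is_plane_def)
  show "L = (+) b ` ?U"
    by (simp add: image_image)
qed

lemma perp_plane_translation:
  assumes "subspace U"
  shows "perp_plane ((+) b ` U) b = (+) b ` {z. \<forall>x\<in>U. orthogonal x z}"
proof -
  have translate: "x \<in> (+) b ` A \<longleftrightarrow> x - b \<in> A" for x :: 'a and A
  proof
    assume "x - b \<in> A"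
    then show "x \<in> (+) b ` A"
      by (rule rev_image_eqI) simp
  qed auto
  have perp: "x \<in> perp_plane ((+) b ` U) b \<longleftrightarrow> (\<forall>y\<in>U. orthogonal y (x - b))" for x
  proof
    assume x: "x \<in> perp_plane ((+) b ` U) b"
    show "\<forall>y\<in>U. orthogonal y (x - b)"
    proof
      fix y assume "y \<in> U"
      then have "(x - b) \<bullet> ((b + y) - (b + 0)) = 0"
        using x subspace_0[OF assms] unfolding perp_plane_def by blast
      then show "orthogonal y (x - b)"
        by (simp add: orthogonal_def inner_commute)
    qed
  next
    assume x: "\<forall>y\<in>U. orthogonal y (x - b)"
    show "x \<in> perp_plane ((+) b ` U) b"
      unfolding perp_plane_def
    proof (intro CollectI ballI)
      fix y' z' assume "y' \<in> (+) b ` U" "z' \<in> (+) b ` U"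
      then obtain y z where "y \<in> U" "z \<in> U" "y' - z' = y - z"
        by auto
      moreover have "(x - b) \<bullet> y = 0" "(x - b) \<bullet> z = 0"
        using x \<open>y \<in> U\<close> \<open>z \<in> U\<close> by (auto simp: orthogonal_def inner_commute)
      ultimately show "(x - b) \<bullet> (y' - z') = 0"
        by (simp add: inner_diff_right)
    qed
  qed
  show ?thesis
    by (rule set_eqI) (simp add: translate perp)
qed

lemma is_plane_perp_plane:
  fixes L :: "'a::euclidean_space set"
  assumes "is_plane j L" "b \<in> L"
  shows "is_plane (DIM('a) - j) (perp_plane L b)"
proof -
  obtain U where U: "subspace U" "dim U = j" "L = (+) b ` U"
    using is_plane_translationE[OF assms] .
  let ?U_perp = "{z. \<forall>x\<in>U. orthogonal x z}"
  have "dim ?U_perp + dim U = DIM('a)"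
    using dim_subspace_orthogonal_to_vectors[of U UNIV] U(1) by simp
  then have "DIM('a) - j = dim ?U_perp"
    using U(2) by simp
  then show ?thesis
    unfolding U(3) perp_plane_translation[OF U(1)]
    by (simp add: is_plane_translation subspace_orthogonal_to_vectors)
qed

lemma flat_vecs_translation:
  assumes "subspace W" "\<forall>v\<in>V. \<exists>w\<in>W. w \<noteq> 0 \<and> vec_angle v w \<le> \<delta>"
  shows "flat_vecs (dim W) \<delta> V ((+) b ` W)"
  unfolding flat_vecs_def
proof (intro conjI ballI is_plane_translation assms(1))
  fix v assume "v \<in> V"
  then obtain w where "w \<in> W" "w \<noteq> 0" "vec_angle v w \<le> \<delta>"
    using assms(2) by blast
  moreover have "plane_angle v ((+) b ` W) \<le> vec_angle v ((b + w) - (b + 0))"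
    using \<open>w \<in> W\<close> \<open>w \<noteq> 0\<close> subspace_0[OF assms(1)] by (intro plane_angle_le_vec_angle) auto
  ultimately show "plane_angle v ((+) b ` W) \<le> \<delta>"
    by simp
qed

lemma flat_vecs_translation_imp_near:
  assumes U: "subspace U" and flat: "flat_vecs k e V ((+) b ` U)" and e: "e < pi / 2"
    and v: "v \<in> V" "norm v = 1"
  shows "\<exists>p\<in>U. (\<forall>x\<in>U. orthogonal x (v - p)) \<and> norm (v - p) \<le> e"
proof -
  obtain p where p: "p \<in> U" "\<forall>x\<in>U. orthogonal x (v - p)"
    using subspace_orthogonal_decomp[OF U] .
  moreover have "norm (v - p) \<le> e"
    using v p flat e U
    by (intro orthogonal_component_le_plane_angle[where p = p and U = U and L = "(+) b ` U"])
       (auto simp: subspace_diff flat_vecs_def)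
  ultimately show ?thesis
    by blast
qed

lemma plane_angle_perp_plane_le:
  assumes U: "subspace U" and u: "norm u = 1"
    and z: "\<forall>x\<in>U. orthogonal x z" "u - z \<in> U" "norm (u - z) \<le> sin a"
    and a: "0 \<le> a" "a < pi / 2"
  shows "plane_angle u (perp_plane ((+) b ` U) b) \<le> a"
proof -
  have "z \<noteq> 0 \<and> vec_angle u z \<le> a"
    using z a by (intro vec_angle_le_of_orthogonal_remainder[OF u]) auto
  moreover have "b + z \<in> perp_plane ((+) b ` U) b" "b + 0 \<in> perp_plane ((+) b ` U) b"
    using z(1) by (auto simp: perp_plane_translation[OF U] orthogonal_clauses)
  ultimately show ?thesis
    using plane_angle_le_vec_angle[of "b + z" _ "b + 0" u] by force
qed

lemma plane_angle_perp_plane_le_of_minimal_flat: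
  assumes U: "subspace U" and \<beta>: "0 < \<beta>" "\<beta> \<le> 1/4" "8 * \<beta> \<le> sin a"
    and a: "0 \<le> a" "a < pi / 2" and V: "\<forall>v\<in>V. norm v = 1"
    and flat: "flat_vecs (dim U) (\<beta> ^ dim U) V ((+) b ` U)"
    and minimal: "\<forall>j'<dim U. \<forall>L. b \<in> L \<longrightarrow> \<not> flat_vecs j' (\<beta> ^ j') V L"
    and x: "\<forall>v\<in>V. \<bar>x \<bullet> v\<bar> \<le> \<beta> ^ dim U * norm x"
  shows "plane_angle x (perp_plane ((+) b ` U) b) \<le> a"
proof (cases "x = 0")
  case True
  then show ?thesis
    using a by (simp add: plane_angle_def)
next
  case False
  define u where "u = x /\<^sub>R norm x"
  have u: "norm u = 1" "plane_angle u L = plane_angle x L" for L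
    using False by (simp_all add: u_def plane_angle_scaleR)
  have "\<bar>u \<bullet> v\<bar> = \<bar>x \<bullet> v\<bar> / norm x" for v
    by (simp add: u_def abs_mult divide_inverse_commute)
  then have u_V: "\<bar>u \<bullet> v\<bar> \<le> \<beta> ^ dim U" if "v \<in> V" for v
    using x that False by (simp add: pos_divide_le_eq)
  have "\<beta> ^ dim U < pi / 2"
    using \<beta> pi_gt3 power_le_one[of \<beta> "dim U"] by auto
  then have near: "norm v = 1 \<and> (\<exists>p\<in>U. (\<forall>x\<in>U. orthogonal x (v - p)) \<and> norm (v - p) \<le> \<beta> ^ dim U)"
    if "v \<in> V" for v
    using flat_vecs_translation_imp_near[OF U flat] that V by blast
  have no_smaller: "\<not> (\<forall>v\<in>V. \<exists>w\<in>W. w \<noteq> 0 \<and> vec_angle v w \<le> \<beta> ^ dim W)"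
    if W: "subspace W" "dim W < dim U" for W
  proof
    assume "\<forall>v\<in>V. \<exists>w\<in>W. w \<noteq> 0 \<and> vec_angle v w \<le> \<beta> ^ dim W"
    then have "flat_vecs (dim W) (\<beta> ^ dim W) V ((+) b ` W)"
      by (rule flat_vecs_translation[OF W(1)])
    moreover have "b \<in> (+) b ` W"
      using subspace_0[OF W(1)] by force
    ultimately show False
      using minimal W(2) by blast
  qed
  obtain z where "\<forall>x\<in>U. orthogonal x z" "u - z \<in> U" "norm (u - z) < 8 * \<beta>"
    using unit_vector_near_orthogonal_complement[OF U \<beta>(1,2) near no_smaller u(1) u_V] by blast
  then have "plane_angle u (perp_plane ((+) b ` U) b) \<le> a"
    using U u(1) \<beta>(3) a by (intro plane_angle_perp_plane_le) auto
  then show ?thesis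
    using u(2) by simp
qed

theorem corollary1:
  fixes \<alpha> :: real
  assumes "\<alpha> > 0"
  shows "\<exists>\<beta>>0. \<forall>(m::nat) (H :: nat \<Rightarrow> 'a::euclidean_space set) (v :: nat \<Rightarrow> 'a) b j LB S p.
     (\<forall>i\<in>{1..m}. is_plane (DIM('a) - 1) (H i) \<and> b \<in> H i
                  \<and> norm (v i) = 1 \<and> (\<forall>x\<in>H i. \<forall>y\<in>H i. v i \<bullet> (x - y) = 0))
     \<and> b \<in> LB \<and> flat_vecs j (\<beta> ^ j) (v ` {1..m}) LB
     \<and> (\<forall>j'<j. \<forall>L. b \<in> L \<longrightarrow> \<not> flat_vecs j' (\<beta> ^ j') (v ` {1..m}) L)
     \<and> p \<in> S
     \<and> (\<forall>i\<in>{1..m}. flat_set p (DIM('a) - 1) (\<beta> ^ DIM('a)) S (H i))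
     \<longrightarrow> flat_set p (DIM('a) - j) \<alpha> S (perp_plane LB b)"
proof -
  define a where "a = min \<alpha> 1"
  have a: "0 < a" "a < pi / 2" "a \<le> \<alpha>"
    using assms pi_gt3 by (auto simp: a_def)
  \<comment> \<open>\<open>\<beta> \<le> 1/4\<close> absorbs the error terms when a dimension is removed, and \<open>8 * \<beta> \<le> sin a\<close>
    turns distance \<open>< 8 * \<beta>\<close> from the orthogonal complement into angle \<open>\<le> a\<close>.\<close>
  define \<beta> where "\<beta> = min (1/4) (sin a / 8)"
  have \<beta>: "0 < \<beta>" "\<beta> \<le> 1/4" "8 * \<beta> \<le> sin a"
    using a by (auto simp: \<beta>_def sin_gt_zero2)
  show ?thesis
  proof (intro exI[of _ \<beta>] conjI allI impI, fact, elim conjE)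
    fix m H and v :: "nat \<Rightarrow> 'a" and b j LB S p
    assume normals: "\<forall>i\<in>{1..m}. is_plane (DIM('a) - 1) (H i) \<and> b \<in> H i
                  \<and> norm (v i) = 1 \<and> (\<forall>x\<in>H i. \<forall>y\<in>H i. v i \<bullet> (x - y) = 0)"
      and "b \<in> LB" and flat: "flat_vecs j (\<beta> ^ j) (v ` {1..m}) LB"
      and minimal: "\<forall>j'<j. \<forall>L. b \<in> L \<longrightarrow> \<not> flat_vecs j' (\<beta> ^ j') (v ` {1..m}) L"
      and "p \<in> S" and S_flat: "\<forall>i\<in>{1..m}. flat_set p (DIM('a) - 1) (\<beta> ^ DIM('a)) S (H i)"
    obtain U where U: "subspace U" "dim U = j" "LB = (+) b ` U"
      using is_plane_translationE[of j LB b] flat \<open>b \<in> LB\<close> by (auto simp: flat_vecs_def)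
    have "\<beta> ^ DIM('a) \<le> \<beta> ^ dim U" "\<beta> ^ DIM('a) < pi / 2"
      using \<beta> pi_gt3 dim_subset_UNIV[of U] power_le_one[of \<beta> "DIM('a)"]
      by (auto intro: power_decreasing)
    have "plane_angle x (perp_plane LB b) \<le> \<alpha>" if x: "x \<in> {p - q |q. q \<in> S}" for x
    proof -
      have "\<bar>x \<bullet> v i\<bar> \<le> \<beta> ^ DIM('a) * norm x" if "i \<in> {1..m}" for i
        using that normals S_flat x \<open>\<beta> ^ DIM('a) < pi / 2\<close>
        by (intro abs_inner_normal_le_plane_angle[where H = "H i"])
           (auto simp: flat_set_def flat_vecs_def)
      then have "\<forall>w\<in>v ` {1..m}. \<bar>x \<bullet> w\<bar> \<le> \<beta> ^ dim U * norm x"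
        using mult_right_mono[OF \<open>\<beta> ^ DIM('a) \<le> \<beta> ^ dim U\<close> norm_ge_zero[of x]] by force
      moreover have "\<forall>w\<in>v ` {1..m}. norm w = 1"
        using normals by auto
      ultimately have "plane_angle x (perp_plane ((+) b ` U) b) \<le> a"
        using plane_angle_perp_plane_le_of_minimal_flat[OF U(1) \<beta> less_imp_le[OF a(1)] a(2) _
            flat[folded U(2), unfolded U(3)] minimal[folded U(2)]] by blast
      then show ?thesis
        using a(3) U(3) by simp
    qed
    moreover have "is_plane (DIM('a) - j) (perp_plane LB b)"
      using flat \<open>b \<in> LB\<close> by (intro is_plane_perp_plane) (auto simp: flat_vecs_def)
    ultimately show "flat_set p (DIM('a) - j) \<alpha> S (perp_plane LB b)"
      using \<open>p \<in> S\<close> by (simp add: flat_set_def flat_vecs_def)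
  qed
qed

end
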